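(* Let $p\ge 1$ and $c>0$ be constants, let $a>0$, and let $x_a:[0,\infty)\to\mathbb{R}$ be the unique solution of $$x'''+c\,x^p\, x''=0,\qquad x(0)=0=x'(0),\quad x''(0)=a$$ (which is defined on all of $[0,\infty)$). Then $\lim_{t\to\infty} x_a''(t)=0$, and the limit $h(a):=\lim_{t\to\infty} x_a'(t)$ exists, is finite and is positive. *)

theory Defs
  imports "HOL-Analysis.Analysis"
begin

end

theory Submission
  imports Defs
begin

text \<open>
  Since x''' = -c x^p x'', the second derivative solves a linear ODE and cannot reach zero:
  before a first zero, x is nonnegative and increasing, so the decay rate c x^p is bounded and
  x'' stays above a positive exponential. Hence x'' > 0, x' increases and x grows at least
  linearly; once x \<ge> 1 the decay rate is at least c, so x'' decays exponentially. Then x'' \<rightarrow> 0,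
  and x' is increasing and bounded, hence convergent to a positive limit.
\<close>

lemma has_real_derivative_on_interval:
  fixes f f' :: "real \<Rightarrow> real"
  assumes "{u..v} \<subseteq> S"
    and deriv: "\<And>t. t \<in> {u..v} \<Longrightarrow> (f has_real_derivative f' t) (at t within S)"
  shows "continuous_on {u..v} f"
    and "\<And>t. u < t \<Longrightarrow> t < v \<Longrightarrow> (f has_real_derivative f' t) (at t)"
proof -
  have deriv_Icc: "(f has_real_derivative f' t) (at t within {u..v})" if "t \<in> {u..v}" for t
    using deriv[OF that] assms(1) by (rule has_field_derivative_subset)
  then show "continuous_on {u..v} f"
    using DERIV_continuous continuous_on_eq_continuous_within by blast
  show "(f has_real_derivative f' t) (at t)" if "u < t" "t < v" for t
    using deriv_Icc[of t] that by (simp add: at_within_Icc_at)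
qed

lemma has_real_derivative_nonneg_imp_le:
  fixes f f' :: "real \<Rightarrow> real"
  assumes "u \<le> v" and "{u..v} \<subseteq> S"
    and "\<And>t. t \<in> {u..v} \<Longrightarrow> (f has_real_derivative f' t) (at t within S)"
    and "\<And>t. u < t \<Longrightarrow> t < v \<Longrightarrow> 0 \<le> f' t"
  shows "f u \<le> f v"
  using has_real_derivative_on_interval[OF assms(2,3)] assms(1,4)
  by (metis DERIV_nonneg_imp_increasing_open)

lemma has_real_derivative_pos_imp_less:
  fixes f f' :: "real \<Rightarrow> real"
  assumes "u < v" and "{u..v} \<subseteq> S"
    and "\<And>t. t \<in> {u..v} \<Longrightarrow> (f has_real_derivative f' t) (at t within S)"
    and "\<And>t. u < t \<Longrightarrow> t < v \<Longrightarrow> 0 < f' t"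
  shows "f u < f v"
  using has_real_derivative_on_interval[OF assms(2,3)] assms(1,4)
  by (metis DERIV_pos_imp_increasing_open)

lemma has_real_derivative_exp_weighted:
  fixes y q :: "real \<Rightarrow> real"
  assumes "(y has_real_derivative - q t * y t) (at t within S)"
  shows "((\<lambda>s. y s * exp (M * s)) has_real_derivative exp (M * t) * y t * (M - q t))
    (at t within S)"
proof -
  have "((\<lambda>s. exp (M * s)) has_real_derivative exp (M * t) * M) (at t within S)"
    by (auto intro!: derivative_eq_intros)
  from DERIV_mult[OF assms this] show ?thesis
    by (rule DERIV_cong) (simp add: algebra_simps)
qed

lemma linear_ode_exp_weighted_mono:
  fixes y q :: "real \<Rightarrow> real"
  assumes "u \<le> v" and "{u..v} \<subseteq> S"
    and "\<And>t. t \<in> {u..v} \<Longrightarrow> (y has_real_derivative - q t * y t) (at t within S)"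
    and "\<And>t. u < t \<Longrightarrow> t < v \<Longrightarrow> 0 \<le> y t"
    and "\<And>t. u < t \<Longrightarrow> t < v \<Longrightarrow> q t \<le> M"
  shows "y u * exp (M * u) \<le> y v * exp (M * v)"
  using assms(1,2)
proof (rule has_real_derivative_nonneg_imp_le)
  show "((\<lambda>s. y s * exp (M * s)) has_real_derivative exp (M * t) * y t * (M - q t))
    (at t within S)" if "t \<in> {u..v}" for t
    using assms(3)[OF that] by (rule has_real_derivative_exp_weighted)
qed (use assms(4,5) in simp)

lemma linear_ode_exp_weighted_antimono:
  fixes y q :: "real \<Rightarrow> real"
  assumes "u \<le> v" and "{u..v} \<subseteq> S"
    and "\<And>t. t \<in> {u..v} \<Longrightarrow> (y has_real_derivative - q t * y t) (at t within S)"
    and "\<And>t. u < t \<Longrightarrow> t < v \<Longrightarrow> 0 \<le> y t"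
    and "\<And>t. u < t \<Longrightarrow> t < v \<Longrightarrow> m \<le> q t"
  shows "y v * exp (m * v) \<le> y u * exp (m * u)"
proof -
  have "- (y u * exp (m * u)) \<le> - (y v * exp (m * v))"
    using assms(1,2)
  proof (rule has_real_derivative_nonneg_imp_le)
    show "((\<lambda>s. - (y s * exp (m * s))) has_real_derivative - (exp (m * t) * y t * (m - q t)))
      (at t within S)" if "t \<in> {u..v}" for t
      using assms(3)[OF that] by (intro DERIV_minus has_real_derivative_exp_weighted)
  qed (use assms(4,5) in \<open>simp add: mult_nonneg_nonpos\<close>)
  then show ?thesis by simp
qed

lemma first_nonpos_point:
  fixes f :: "real \<Rightarrow> real"
  assumes "continuous_on {a..} f" and "0 < f a" and "a \<le> t" and "f t \<le> 0"
  obtains t0 where "a < t0" and "f t0 \<le> 0" and "\<And>s. a \<le> s \<Longrightarrow> s < t0 \<Longrightarrow> 0 < f s"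
proof -
  define S where "S = {a..} \<inter> f -` {..0}"
  have "closed S"
    unfolding S_def by (rule continuous_closed_preimage[OF assms(1)]) auto
  moreover have "S \<noteq> {}" and "bdd_below S"
    using assms(3,4) by (auto simp: S_def bdd_below_def)
  ultimately have "Inf S \<in> S"
    using closed_contains_Inf by blast
  moreover have "0 < f s" if "a \<le> s" "s < Inf S" for s
    using cInf_lower[OF _ \<open>bdd_below S\<close>, of s] that by (force simp: S_def)
  ultimately show thesis
    using assms(2) by (intro that[of "Inf S"]) (auto simp: S_def order.order_iff_strict)
qed

lemma mono_on_tendsto_Sup:
  fixes f :: "real \<Rightarrow> real"
  assumes "mono_on {a..} f" and bdd: "bdd_above (f ` {a..})"
  shows "(f \<longlongrightarrow> Sup (f ` {a..})) at_top"
proof (rule order_tendstoI)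
  fix y assume "y < Sup (f ` {a..})"
  then obtain s where "a \<le> s" "y < f s"
    using less_cSup_iff[OF _ bdd] by auto
  show "\<forall>\<^sub>F t in at_top. y < f t"
    using eventually_ge_at_top[of s]
    by eventually_elim
      (use \<open>a \<le> s\<close> \<open>y < f s\<close> mono_onD[OF assms(1)] in \<open>fastforce intro: less_le_trans\<close>)
next
  fix y assume "Sup (f ` {a..}) < y"
  show "\<forall>\<^sub>F t in at_top. f t < y"
    using eventually_ge_at_top[of a]
    by eventually_elim (use cSup_upper[OF _ bdd] \<open>Sup (f ` {a..}) < y\<close> in fastforce)
qed

locale generalized_blasius =
  fixes p c a :: real and x x1 x2 :: "real \<Rightarrow> real"
  assumes p_nonneg: "0 \<le> p" and c_pos: "0 < c" and a_pos: "0 < a"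
    and x_deriv: "\<And>t. 0 \<le> t \<Longrightarrow> (x has_real_derivative x1 t) (at t within {0..})"
    and x1_deriv: "\<And>t. 0 \<le> t \<Longrightarrow> (x1 has_real_derivative x2 t) (at t within {0..})"
    and x2_deriv: "\<And>t. 0 \<le> t \<Longrightarrow>
      (x2 has_real_derivative - c * x t powr p * x2 t) (at t within {0..})"
    and x_0: "x 0 = 0" and x1_0: "x1 0 = 0" and x2_0: "x2 0 = a"
begin

lemma x2_linear_ode:
  "0 \<le> t \<Longrightarrow> (x2 has_real_derivative - (c * x t powr p) * x2 t) (at t within {0..})"
  using x2_deriv by simp

lemma x2_pos:
  assumes "0 \<le> t"
  shows "0 < x2 t"
proof (rule ccontr)
  assume "\<not> 0 < x2 t"
  have "continuous_on {0..} x2"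
    using x2_deriv by (auto intro!: continuous_on_eq_continuous_within[THEN iffD2] DERIV_continuous)
  then obtain t0 where "0 < t0" "x2 t0 \<le> 0"
    and x2_pos_before: "\<And>s. 0 \<le> s \<Longrightarrow> s < t0 \<Longrightarrow> 0 < x2 s"
    using first_nonpos_point[of 0 x2 t] \<open>\<not> 0 < x2 t\<close> assms a_pos x2_0 by auto
  have x1_nonneg: "0 \<le> x1 s" if "0 \<le> s" "s \<le> t0" for s
  proof -
    have "x1 0 \<le> x1 s"
      by (rule has_real_derivative_nonneg_imp_le[where S = "{0..}" and f' = x2])
        (use that x1_deriv x2_pos_before in \<open>auto intro: less_imp_le\<close>)
    then show ?thesis
      using x1_0 by simp
  qed
  have x_mono_before: "x s \<le> x s'" if "0 \<le> s" "s \<le> s'" "s' \<le> t0" for s s'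
    by (rule has_real_derivative_nonneg_imp_le[where S = "{0..}" and f' = x1])
      (use that x_deriv x1_nonneg in auto)
  define M where "M = c * x t0 powr p"
  have "x2 0 * exp (M * 0) \<le> x2 t0 * exp (M * t0)"
  proof (rule linear_ode_exp_weighted_mono[where q = "\<lambda>s. c * x s powr p" and S = "{0..}"])
    show "c * x s powr p \<le> M" if "0 < s" "s < t0" for s
      unfolding M_def using x_mono_before[of 0 s] x_mono_before[of s t0] x_0 that c_pos p_nonneg
      by (simp add: powr_mono2)
  qed (use \<open>0 < t0\<close> x2_linear_ode less_imp_le[OF x2_pos_before] in auto)
  moreover have "x2 t0 * exp (M * t0) \<le> 0"
    using \<open>x2 t0 \<le> 0\<close> by (simp add: mult_nonpos_nonneg)
  ultimately show False
    using a_pos x2_0 by simp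
qed

lemma x1_mono: "0 \<le> s \<Longrightarrow> s \<le> t \<Longrightarrow> x1 s \<le> x1 t"
  using has_real_derivative_nonneg_imp_le[of s t "{0..}" x1 x2] x1_deriv x2_pos
  by (fastforce intro: less_imp_le)

lemma x1_nonneg: "0 \<le> t \<Longrightarrow> 0 \<le> x1 t"
  using x1_mono[of 0 t] x1_0 by simp

lemma x_mono: "0 \<le> s \<Longrightarrow> s \<le> t \<Longrightarrow> x s \<le> x t"
  using has_real_derivative_nonneg_imp_le[of s t "{0..}" x x1] x_deriv x1_nonneg by fastforce

lemma x1_1_pos: "0 < x1 1"
  using has_real_derivative_pos_imp_less[of 0 1 "{0..}" x1 x2] x1_deriv x2_pos x1_0 by fastforce

lemma x_ge_linear:
  assumes "1 \<le> t"
  shows "x 1 + x1 1 * (t - 1) \<le> x t"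
proof -
  have "x 1 - x1 1 * 1 \<le> x t - x1 1 * t"
  proof (rule has_real_derivative_nonneg_imp_le[where f = "\<lambda>s. x s - x1 1 * s" and S = "{0..}"
      and f' = "\<lambda>s. x1 s - x1 1"])
    show "((\<lambda>s. x s - x1 1 * s) has_real_derivative x1 s - x1 1) (at s within {0..})"
      if "s \<in> {1..t}" for s
      using that x_deriv[of s] by (auto intro!: derivative_eq_intros)
  qed (use assms x1_mono in auto)
  then show ?thesis by (simp add: algebra_simps)
qed

lemma x_eventually_ge_one:
  obtains T where "0 \<le> T" and "\<And>t. T \<le> t \<Longrightarrow> 1 \<le> x t"
proof -
  define T where "T = 1 + 1 / x1 1"
  have "0 \<le> T"
    using x1_1_pos by (simp add: T_def)
  have "1 \<le> x T"
    using x_ge_linear[of T] x_mono[of 0 1] x_0 x1_1_pos by (simp add: T_def)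
  then show thesis
    using that[of T] x_mono[of T] \<open>0 \<le> T\<close> by force
qed

lemma x2_exp_bound:
  obtains T K where "0 \<le> T" and "0 \<le> K" and "\<And>t. T \<le> t \<Longrightarrow> x2 t \<le> K * exp (- c * t)"
proof -
  obtain T where "0 \<le> T" and x_ge_one: "\<And>t. T \<le> t \<Longrightarrow> 1 \<le> x t"
    using x_eventually_ge_one by blast
  define K where "K = x2 T * exp (c * T)"
  have "x2 t \<le> K * exp (- c * t)" if "T \<le> t" for t
  proof -
    have "x2 t * exp (c * t) \<le> K"
      unfolding K_def
    proof (rule linear_ode_exp_weighted_antimono[where q = "\<lambda>s. c * x s powr p" and S = "{0..}"])
      show "c \<le> c * x s powr p" if "T < s" for s
        using x_ge_one[of s] that c_pos p_nonneg by (simp add: ge_one_powr_ge_zero)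
    qed (use that \<open>0 \<le> T\<close> x2_linear_ode x2_pos[THEN less_imp_le] in auto)
    then have "x2 t * exp (c * t) * exp (- c * t) \<le> K * exp (- c * t)"
      by simp
    then show ?thesis
      by (simp add: mult.assoc flip: exp_add)
  qed
  moreover have "0 \<le> K"
    using x2_pos[OF \<open>0 \<le> T\<close>] by (simp add: K_def)
  ultimately show thesis
    using that \<open>0 \<le> T\<close> by blast
qed

lemma x2_tendsto_0: "(x2 \<longlongrightarrow> 0) at_top"
proof -
  obtain T K where "0 \<le> T" and "0 \<le> K" and x2_le: "\<And>t. T \<le> t \<Longrightarrow> x2 t \<le> K * exp (- c * t)"
    using x2_exp_bound by blast
  show ?thesis
  proof (rule tendsto_sandwich[of "\<lambda>_. 0" _ _ "\<lambda>t. K * exp (- c * t)"])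
    show "\<forall>\<^sub>F t in at_top. 0 \<le> x2 t"
      using eventually_ge_at_top[of 0] by eventually_elim (simp add: x2_pos less_imp_le)
    show "\<forall>\<^sub>F t in at_top. x2 t \<le> K * exp (- c * t)"
      using eventually_ge_at_top[of T] by eventually_elim (rule x2_le)
    show "((\<lambda>t. K * exp (- c * t)) \<longlongrightarrow> 0) at_top"
      using c_pos
      by (intro tendsto_mult_right_zero filterlim_compose[OF exp_at_bot]
          filterlim_tendsto_neg_mult_at_bot[OF tendsto_const] filterlim_ident) auto
  qed simp
qed

lemma x1_bounded: "bdd_above (x1 ` {0..})"
proof -
  obtain T K where "0 \<le> T" and "0 \<le> K" and x2_le: "\<And>t. T \<le> t \<Longrightarrow> x2 t \<le> K * exp (- c * t)"
    using x2_exp_bound by blast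
  \<comment> \<open>Past T, x1 grows by at most the integral of the exponential bound on x2.\<close>
  have "x1 t \<le> x1 T + K / c * exp (- c * T)" if "T \<le> t" for t
  proof -
    have "- (x1 T + K / c * exp (- c * T)) \<le> - (x1 t + K / c * exp (- c * t))"
    proof (rule has_real_derivative_nonneg_imp_le[where f = "\<lambda>s. - (x1 s + K / c * exp (- c * s))"
        and S = "{0..}" and f' = "\<lambda>s. K * exp (- c * s) - x2 s"])
      show "((\<lambda>s. - (x1 s + K / c * exp (- c * s))) has_real_derivative K * exp (- c * s) - x2 s)
        (at s within {0..})" if "s \<in> {T..t}" for s
        using that \<open>0 \<le> T\<close> x1_deriv[of s] c_pos by (auto intro!: derivative_eq_intros)
    qed (use that \<open>0 \<le> T\<close> x2_le in auto)
    moreover have "0 \<le> K / c * exp (- c * t)"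
      using \<open>0 \<le> K\<close> c_pos by simp
    ultimately show ?thesis by linarith
  qed
  moreover have "x1 t \<le> x1 T" if "0 \<le> t" "t \<le> T" for t
    using x1_mono that by blast
  moreover have "0 \<le> K / c * exp (- c * T)"
    using \<open>0 \<le> K\<close> c_pos by simp
  ultimately have "x1 t \<le> x1 T + K / c * exp (- c * T)" if "0 \<le> t" for t
    using that by (cases "T \<le> t") force+
  then show ?thesis
    by (auto simp: bdd_above_def)
qed

lemma x1_tendsto_Sup: "(x1 \<longlongrightarrow> Sup (x1 ` {0..})) at_top"
  using x1_mono x1_bounded by (intro mono_on_tendsto_Sup) (auto intro: mono_onI)

lemma Sup_x1_pos: "0 < Sup (x1 ` {0..})"
  using x1_1_pos cSup_upper[OF _ x1_bounded, of "x1 1"] by simp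

end

theorem lemma2:
  fixes p c a :: real and x x1 x2 :: "real \<Rightarrow> real"
  assumes "p \<ge> 1" and "c > 0" and "a > 0"
    and "\<And>t. t \<ge> 0 \<Longrightarrow> (x has_real_derivative x1 t) (at t within {0..})"
    and "\<And>t. t \<ge> 0 \<Longrightarrow> (x1 has_real_derivative x2 t) (at t within {0..})"
    and "\<And>t. t \<ge> 0 \<Longrightarrow> (x2 has_real_derivative (- c * (x t) powr p * x2 t)) (at t within {0..})"
    and "x 0 = 0" and "x1 0 = 0" and "x2 0 = a"
  shows "(x2 \<longlongrightarrow> 0) at_top \<and> (\<exists>h. (x1 \<longlongrightarrow> h) at_top \<and> h > 0)"
proof -
  interpret generalized_blasius p c a x x1 x2
    using assms by unfold_locales auto
  show ?thesis
    using x2_tendsto_0 x1_tendsto_Sup Sup_x1_pos by blast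
qed

end
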